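(* Let $D$ be a Ferrers diagram with $n$ rows and $n$ columns, i.e. $D = \{(a,b) : 1 \le a \le n,\ 1 \le b \le \lambda_a\}$ for integers $n = \lambda_1 \ge \lambda_2 \ge \cdots \ge \lambda_n \ge 1$. Let $G$ be its Ferrers graph: the bipartite graph with row-vertices $1,\dots,n$ and column-vertices $1,\dots,n$, row $a$ adjacent to column $b$ if and only if $(a,b) \in D$. Every Hamiltonian path of $G$ has one end a row-vertex and the other a column-vertex; write it, starting from its row end, as $a_1, b_1, a_2, b_2, \dots, a_n, b_n$ (the $a_i$ rows, the $b_i$ columns). An $n$-rook placement on $D$ is a set of $n$ boxes of $D$, no two in the same row or column. Define a map $\Phi$ on Hamiltonian paths of $G$ as follows. Set $b_0 := 1$ and start with two empty sets $A$, $B$ of boxes. For $i = 1, \dots, n$ in turn: if no box of $A$ lies in column $b_{i-1}$, add the box $(a_i, b_{i-1})$ to $A$; otherwise add to $A$ the box $(a_i, c)$, where $c$ is the smallest column index greater than $b_{i-1}$ such that no box of $A$ lies in column $c$; then add the box $(a_i, b_i)$ to $B$. Set $\Phi(\text{path}) = (A, B)$. Then $\Phi$ is well defined (in particular the column $c$ always exists and every box added to $A$ lies in $D$), and $\Phi$ is a bijection from the set of Hamiltonian paths of $G$ onto the set of ordered pairs $(A,B)$ of $n$-rook placements on $D$. Consequently the number of Hamiltonian paths of $G$ equals the square of the number of $n$-rook placements on $D$.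
   Context: Boxes are indexed as $(a,b)$ = (row, column). Hamiltonian paths are regarded as undirected paths through all $2n$ vertices; each is recorded uniquely as the vertex sequence starting from its row-vertex end. *)

theory Defs
  imports Main
begin

definition ferrers_shape :: "nat \<Rightarrow> (nat \<Rightarrow> nat) \<Rightarrow> bool" where
  "ferrers_shape n lam \<longleftrightarrow> n \<ge> 1 \<and> lam 1 = n \<and>
     (\<forall>a. 1 \<le> a \<and> a < n \<longrightarrow> lam (Suc a) \<le> lam a) \<and> lam n \<ge> 1"

definition ferrers_diagram :: "nat \<Rightarrow> (nat \<Rightarrow> nat) \<Rightarrow> (nat \<times> nat) set" where
  "ferrers_diagram n lam = {(a, b). 1 \<le> a \<and> a \<le> n \<and> 1 \<le> b \<and> b \<le> lam a}"

text \<open>Ferrers graph: vertices Inl a (row a) and Inr b (column b), 1 <= a,b <= n.\<close>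
definition fg_vertices :: "nat \<Rightarrow> (nat + nat) set" where
  "fg_vertices n = Inl ` {1..n} \<union> Inr ` {1..n}"

fun fg_adj :: "(nat \<times> nat) set \<Rightarrow> nat + nat \<Rightarrow> nat + nat \<Rightarrow> bool" where
  "fg_adj D (Inl a) (Inr b) = ((a, b) \<in> D)"
| "fg_adj D (Inr b) (Inl a) = ((a, b) \<in> D)"
| "fg_adj D _ _ = False"

text \<open>Hamiltonian paths of the Ferrers graph, each recorded as its vertex sequence
  starting from its row-vertex end.\<close>
definition ham_paths :: "nat \<Rightarrow> (nat \<Rightarrow> nat) \<Rightarrow> (nat + nat) list set" where
  "ham_paths n lam = {vs. distinct vs \<and> set vs = fg_vertices n \<and>
      (\<forall>i. Suc i < length vs \<longrightarrow> fg_adj (ferrers_diagram n lam) (vs ! i) (vs ! Suc i)) \<and>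
      vs \<noteq> [] \<and> isl (hd vs)}"

text \<open>The pairs (a_i, b_i), i = 1..n, of a path a_1, b_1, ..., a_n, b_n.\<close>
definition path_pairs :: "nat \<Rightarrow> (nat + nat) list \<Rightarrow> (nat \<times> nat) list" where
  "path_pairs n vs = map (\<lambda>i. (projl (vs ! (2 * i)), projr (vs ! (2 * i + 1)))) [0..<n]"

definition rook_placements :: "nat \<Rightarrow> (nat \<Rightarrow> nat) \<Rightarrow> (nat \<times> nat) set set" where
  "rook_placements n lam = {R. R \<subseteq> ferrers_diagram n lam \<and> card R = n \<and>
      inj_on fst R \<and> inj_on snd R}"

definition phi_col :: "nat \<Rightarrow> (nat \<times> nat) set \<Rightarrow> nat" where
  "phi_col prev A = (if prev \<notin> snd ` A then prev else (LEAST c. prev < c \<and> c \<notin> snd ` A))"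

fun phi_aux :: "(nat \<times> nat) list \<Rightarrow> nat \<Rightarrow> (nat \<times> nat) set \<Rightarrow> (nat \<times> nat) set
                 \<Rightarrow> (nat \<times> nat) set \<times> (nat \<times> nat) set" where
  "phi_aux [] prev A B = (A, B)"
| "phi_aux ((a, b) # ps) prev A B =
     phi_aux ps b (insert (a, phi_col prev A) A) (insert (a, b) B)"

definition Phi :: "nat \<Rightarrow> (nat + nat) list \<Rightarrow> (nat \<times> nat) set \<times> (nat \<times> nat) set" where
  "Phi n vs = phi_aux (path_pairs n vs) 1 {} {}"

text \<open>State before step i+1 (0-based i): A after i steps and the column b_i (b_0 = 1).\<close>
definition phi_A_before :: "nat \<Rightarrow> (nat + nat) list \<Rightarrow> nat \<Rightarrow> (nat \<times> nat) set" where
  "phi_A_before n vs i = fst (phi_aux (take i (path_pairs n vs)) 1 {} {})"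

definition phi_prev :: "nat \<Rightarrow> (nat + nat) list \<Rightarrow> nat \<Rightarrow> nat" where
  "phi_prev n vs i = (if i = 0 then 1 else snd (path_pairs n vs ! (i - 1)))"

end

theory Submission
  imports Defs
begin

text \<open>
  Write a path as rows r 0, ..., r (n - 1) and columns k 0, ..., k (n - 1), let p i be the
  previous column (p 0 = 1 and p i = k (i - 1) otherwise) and c i the column of the box added to A
  at step i. Because the k i are distinct, an induction shows that after step i + 1 the columns
  of A are k 0, ..., k (i - 1) together with the least positive integer missing among them. Hence
  either c i = p i, or p i is already used and c i is that least missing integer, so that
  c i \<le> i + 1 \<le> n and c i \<le> k i. Either way (r i, c i) lies weakly left of a box (r i, p i)
  or (r i, k i) of the path, hence in the diagram; and the c i are distinct by construction.

  Conversely, c i depends only on k 0, ..., k (i - 1); then r i is the row of the A-rook in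
  column c i and k i is the column of the B-rook in row r i. So (A, B) determines the path, and
  running this recursion on an arbitrary pair of placements yields a Hamiltonian path: its edges
  (r (i + 1), k i) lie in the diagram because k i = p (i + 1) \<le> c (i + 1).
\<close>

section \<open>The columns of A\<close>

definition next_free :: "nat \<Rightarrow> nat set \<Rightarrow> nat" where
  "next_free p S = (if p \<notin> S then p else (LEAST c. p < c \<and> c \<notin> S))"

definition mex :: "nat set \<Rightarrow> nat" where
  "mex S = (LEAST m. 0 < m \<and> m \<notin> S)"

lemma phi_col_eq_next_free: "phi_col p A = next_free p (snd ` A)"
  by (simp add: phi_col_def next_free_def)

lemma exists_greater_notin:
  fixes S :: "nat set"
  assumes "finite S"
  shows "\<exists>c. p < c \<and> c \<notin> S"
proof -
  obtain m where "\<forall>s\<in>S. s < m" using assms finite_nat_set_iff_bounded by blast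
  then show ?thesis by (intro exI[of _ "Suc p + m"]) auto
qed

lemma next_free_notin: "finite S \<Longrightarrow> next_free p S \<notin> S"
  unfolding next_free_def using LeastI_ex[OF exists_greater_notin] by auto

lemma next_free_ge: "finite S \<Longrightarrow> p \<le> next_free p S"
  unfolding next_free_def using LeastI_ex[OF exists_greater_notin, of S p] by auto

lemma mex_notin_pos:
  assumes "finite S"
  shows "mex S \<notin> S" and "0 < mex S"
proof -
  have "\<exists>m. 0 < m \<and> m \<notin> S" using exists_greater_notin[OF assms] by blast
  then show "mex S \<notin> S" "0 < mex S" unfolding mex_def by (metis (mono_tags) LeastI_ex)+
qed

lemma mex_le: "0 < j \<Longrightarrow> j \<notin> S \<Longrightarrow> mex S \<le> j"
  unfolding mex_def by (simp add: Least_le)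

lemma mex_le_card_Suc:
  assumes "finite S"
  shows "mex S \<le> Suc (card S)"
proof -
  have "{1..<mex S} \<subseteq> S"
    unfolding mex_def using not_less_Least by fastforce
  then have "card {1..<mex S} \<le> card S" using assms by (rule card_mono[rotated])
  then show ?thesis by simp
qed

lemma mex_insert_mex:
  assumes "finite S"
  shows "mex S < mex (insert (mex S) S)"
    and "next_free (mex S) (insert (mex S) S) = mex (insert (mex S) S)"
proof -
  let ?m = "mex S" and ?m' = "mex (insert (mex S) S)"
  have m': "?m' \<notin> insert ?m S" "0 < ?m'" using mex_notin_pos[of "insert ?m S"] assms by auto
  show less: "?m < ?m'"
  proof (rule ccontr)
    assume "\<not> ?m < ?m'"
    then have "?m' < ?m" using m' by auto
    with m' show False unfolding mex_def using not_less_Least by blast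
  qed
  have "(LEAST c. ?m < c \<and> c \<notin> insert ?m S) = ?m'"
    by (rule Least_equality) (use less m' mex_le in auto)
  then show "next_free ?m (insert ?m S) = ?m'" by (simp add: next_free_def)
qed

lemma mex_insert_other:
  assumes "finite S" "b \<noteq> mex S"
  shows "mex (insert b S) = mex S"
  unfolding mex_def[of "insert b S"]
  by (rule Least_equality) (use assms mex_notin_pos mex_le in auto)

definition prev_col :: "(nat \<Rightarrow> nat) \<Rightarrow> nat \<Rightarrow> nat" where
  "prev_col k i = (if i = 0 then 1 else k (i - 1))"

fun used_cols :: "(nat \<Rightarrow> nat) \<Rightarrow> nat \<Rightarrow> nat set" where
  "used_cols k 0 = {}"
| "used_cols k (Suc i) = insert (next_free (prev_col k i) (used_cols k i)) (used_cols k i)"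

definition a_col :: "(nat \<Rightarrow> nat) \<Rightarrow> nat \<Rightarrow> nat" where
  "a_col k i = next_free (prev_col k i) (used_cols k i)"

lemma finite_used_cols: "finite (used_cols k i)"
  by (induction i) auto

lemma used_cols_eq: "used_cols k i = a_col k ` {..<i}"
  by (induction i) (auto simp: a_col_def lessThan_Suc)

lemma a_col_notin_used_cols: "a_col k i \<notin> used_cols k i"
  unfolding a_col_def by (rule next_free_notin[OF finite_used_cols])

lemma prev_col_le_a_col: "prev_col k i \<le> a_col k i"
  unfolding a_col_def by (rule next_free_ge[OF finite_used_cols])

lemma a_col_pos:
  assumes "\<forall>j<i. 0 < k j"
  shows "0 < a_col k i"
proof -
  have "0 < prev_col k i" using assms by (cases i) (simp_all add: prev_col_def)
  then show ?thesis using prev_col_le_a_col[of k i] by linarith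
qed

lemma inj_a_col: "inj (a_col k)"
proof (rule injI)
  have "a_col k i \<noteq> a_col k j" if "i < j" for i j
    using a_col_notin_used_cols[of k j] that by (metis imageI lessThan_iff used_cols_eq)
  then show "a_col k i = a_col k j \<Longrightarrow> i = j" for i j
    by (metis linorder_neqE_nat)
qed

lemma a_col_cong:
  assumes "\<forall>j<i. k j = k' j"
  shows "a_col k i = a_col k' i"
proof -
  have "prev_col k j = prev_col k' j \<and> used_cols k j = used_cols k' j" if "j \<le> i" for j
    using that by (induction j) (use assms in \<open>auto simp: prev_col_def\<close>)
  then show ?thesis by (simp add: a_col_def)
qed

lemma used_cols_Suc_eq:
  assumes "inj_on k {..<i}" "\<forall>j<i. 0 < k j"
  shows "used_cols k (Suc i) = insert (mex (k ` {..<i})) (k ` {..<i})"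
  using assms
proof (induction i)
  case 0
  have "mex {} = 1" unfolding mex_def by (rule Least_equality) auto
  then show ?case by (simp add: prev_col_def next_free_def)
next
  case (Suc i)
  let ?P = "k ` {..<i}"
  have "inj_on k {..<i}" by (rule inj_on_subset[OF Suc.prems(1)]) auto
  then have IH: "used_cols k (Suc i) = insert (mex ?P) ?P" using Suc by simp
  have new: "k i \<notin> ?P" using inj_on_image_mem_iff[OF Suc.prems(1), of i "{..<i}"] by auto
  have prev: "prev_col k (Suc i) = k i" by (simp add: prev_col_def)
  show ?case
  proof (cases "k i = mex ?P")
    case True
    then show ?thesis using IH prev mex_insert_mex(2)[of ?P] by (simp add: lessThan_Suc)
  next
    case False
    then show ?thesis
      using IH prev new mex_insert_other[of ?P "k i"] by (auto simp: next_free_def lessThan_Suc)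
  qed
qed

lemma a_col_if_prev_used:
  assumes "inj_on k {..<i}" "\<forall>j<i. 0 < k j" "prev_col k i \<in> used_cols k i"
  shows "prev_col k i < a_col k i" and "a_col k i = mex (k ` {..<i})"
proof -
  obtain i' where i: "i = Suc i'" using assms(3) by (cases i) auto
  let ?P = "k ` {..<i'}"
  have used: "used_cols k i = insert (mex ?P) ?P"
    unfolding i by (rule used_cols_Suc_eq) (use assms i in \<open>auto intro: inj_on_subset\<close>)
  have "k i' \<notin> ?P" using inj_on_image_mem_iff[OF assms(1), of i' "{..<i'}"] i by auto
  moreover have "k i' \<in> insert (mex ?P) ?P" using assms(3) by (simp only: used) (simp add: prev_col_def i)
  ultimately have prev: "prev_col k i = mex ?P" by (simp add: prev_col_def i)
  then have "k ` {..<i} = insert (mex ?P) ?P" by (simp add: prev_col_def i lessThan_Suc)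
  then show "a_col k i = mex (k ` {..<i})" "prev_col k i < a_col k i"
    using mex_insert_mex[of ?P] by (simp_all add: a_col_def used prev)
qed

lemma a_col_le_current:
  assumes "inj_on k {..<Suc i}" "\<forall>j\<le>i. 0 < k j" "prev_col k i \<in> used_cols k i"
  shows "a_col k i \<le> k i"
proof -
  have "a_col k i = mex (k ` {..<i})"
    by (rule a_col_if_prev_used) (use assms in \<open>auto intro: inj_on_subset\<close>)
  moreover have "k i \<notin> k ` {..<i}" using inj_on_image_mem_iff[OF assms(1), of i "{..<i}"] by auto
  ultimately show ?thesis using assms(2) mex_le by simp
qed

lemma a_col_bounded:
  assumes "inj_on k {..<i}" "k ` {..<i} \<subseteq> {1..n}" "i < n"
  shows "a_col k i \<in> {1..n}"
proof (cases "prev_col k i \<in> used_cols k i")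
  case True
  have pos: "\<forall>j<i. 0 < k j" using assms(2) by auto
  have "a_col k i = mex (k ` {..<i})" by (rule a_col_if_prev_used(2)[OF assms(1) pos True])
  also have "\<dots> \<le> Suc (card (k ` {..<i}))" by (rule mex_le_card_Suc) simp
  also have "\<dots> \<le> n" using card_image_le[of "{..<i}" k] assms(3) by simp
  finally show ?thesis using a_col_if_prev_used(1)[OF assms(1) pos True] by simp
next
  case False
  then have "a_col k i = prev_col k i" by (simp add: a_col_def next_free_def)
  moreover have "k (i - 1) \<in> {1..n}" if "0 < i"
    using that assms(2) by (meson diff_less image_subset_iff lessThan_iff zero_less_one)
  ultimately show ?thesis using assms(3) by (auto simp: prev_col_def)
qed

section \<open>Hamiltonian paths as interleaved sequences\<close>

definition path_row :: "(nat + nat) list \<Rightarrow> nat \<Rightarrow> nat" where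
  "path_row vs i = projl (vs ! (2 * i))"

definition path_col :: "(nat + nat) list \<Rightarrow> nat \<Rightarrow> nat" where
  "path_col vs i = projr (vs ! (2 * i + 1))"

definition interleave :: "nat \<Rightarrow> (nat \<Rightarrow> nat) \<Rightarrow> (nat \<Rightarrow> nat) \<Rightarrow> (nat + nat) list" where
  "interleave n r k = map (\<lambda>j. if even j then Inl (r (j div 2)) else Inr (k (j div 2))) [0..<2 * n]"

(* r i and k i are a_(i+1) and b_(i+1) of the path a_1, b_1, ..., a_n, b_n. *)
definition ham_seqs :: "nat \<Rightarrow> (nat \<Rightarrow> nat) \<Rightarrow> (nat \<Rightarrow> nat) \<Rightarrow> (nat \<Rightarrow> nat) \<Rightarrow> bool" where
  "ham_seqs n lam r k \<longleftrightarrow> bij_betw r {..<n} {1..n} \<and> bij_betw k {..<n} {1..n} \<and>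
     (\<forall>i<n. (r i, k i) \<in> ferrers_diagram n lam) \<and>
     (\<forall>i. Suc i < n \<longrightarrow> (r (Suc i), k i) \<in> ferrers_diagram n lam)"

lemma length_interleave [simp]: "length (interleave n r k) = 2 * n"
  by (simp add: interleave_def)

lemma nth_interleave:
  "j < 2 * n \<Longrightarrow> interleave n r k ! j = (if even j then Inl (r (j div 2)) else Inr (k (j div 2)))"
  by (simp add: interleave_def)

lemma nth_interleave_row_col:
  assumes "i < n"
  shows "interleave n r k ! (2 * i) = Inl (r i)" and "interleave n r k ! Suc (2 * i) = Inr (k i)"
  using assms by (simp_all add: nth_interleave)

lemma path_pairs_interleave:
  "path_pairs n (interleave n r k) = map (\<lambda>i. (r i, k i)) [0..<n]"
  by (simp add: path_pairs_def nth_interleave_row_col)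

lemma interleave_cong:
  "(\<And>i. i < n \<Longrightarrow> r i = r' i \<and> k i = k' i) \<Longrightarrow> interleave n r k = interleave n r' k'"
  unfolding interleave_def by (rule map_cong) auto

lemma set_interleave: "set (interleave n r k) = r ` {..<n} <+> k ` {..<n}"
proof (intro equalityI subsetI)
  fix x assume "x \<in> set (interleave n r k)"
  then obtain j where j: "j < 2 * n" "x = interleave n r k ! j" by (auto simp: in_set_conv_nth)
  then have "j div 2 < n" by simp
  then show "x \<in> r ` {..<n} <+> k ` {..<n}"
    using j by (cases "even j") (auto simp: nth_interleave intro: InlI InrI)
next
  fix x assume "x \<in> r ` {..<n} <+> k ` {..<n}"
  then consider i where "i < n" "x = interleave n r k ! (2 * i)"
    | i where "i < n" "x = interleave n r k ! Suc (2 * i)"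
    by (auto simp: nth_interleave_row_col)
  then show "x \<in> set (interleave n r k)" by cases (simp_all add: nth_mem)
qed

lemma Plus_eq_Plus_iff: "A <+> B = C <+> D \<longleftrightarrow> A = C \<and> B = D"
proof
  assume eq: "A <+> B = C <+> D"
  have "Inl -` (A <+> B) = A" "Inr -` (A <+> B) = B" for A :: "'a set" and B :: "'b set"
    by auto
  then show "A = C \<and> B = D" using eq by metis
qed simp

lemma distinct_interleave_iff:
  "distinct (interleave n r k) \<longleftrightarrow> inj_on r {..<n} \<and> inj_on k {..<n}"
proof -
  have "card (set (interleave n r k)) = card (r ` {..<n}) + card (k ` {..<n})"
    by (simp add: set_interleave card_Plus)
  moreover have "card (r ` {..<n}) \<le> n" "card (k ` {..<n}) \<le> n"
    using card_image_le[of "{..<n}"] by auto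
  moreover have "distinct (interleave n r k) \<longleftrightarrow> card (set (interleave n r k)) = 2 * n"
    by (metis distinct_card card_distinct length_interleave)
  ultimately show ?thesis
    by (auto simp: inj_on_iff_eq_card)
qed

lemma fg_vertices_eq_Plus: "fg_vertices n = {1..n} <+> {1..n}"
  by (simp add: fg_vertices_def Plus_def)

lemma fg_adj_interleave:
  assumes "Suc j < 2 * n"
  shows "fg_adj D (interleave n r k ! j) (interleave n r k ! Suc j) \<longleftrightarrow>
    (if even j then (r (j div 2), k (j div 2)) \<in> D else (r (Suc (j div 2)), k (j div 2)) \<in> D)"
proof (cases "even j")
  case True
  then have "Suc j div 2 = j div 2" by presburger
  then show ?thesis using True assms by (simp add: nth_interleave)
next
  case False
  then have "Suc j div 2 = Suc (j div 2)" by presburger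
  then show ?thesis using False assms by (simp add: nth_interleave)
qed

lemma interleave_in_ham_paths_iff:
  assumes "0 < n"
  shows "interleave n r k \<in> ham_paths n lam \<longleftrightarrow> ham_seqs n lam r k"
proof -
  let ?p = "interleave n r k" and ?D = "ferrers_diagram n lam"
  have adj: "(\<forall>j. Suc j < 2 * n \<longrightarrow> fg_adj ?D (?p ! j) (?p ! Suc j)) \<longleftrightarrow>
      (\<forall>i<n. (r i, k i) \<in> ?D) \<and> (\<forall>i. Suc i < n \<longrightarrow> (r (Suc i), k i) \<in> ?D)"
  proof (intro iffI conjI allI impI)
    assume H: "\<forall>j. Suc j < 2 * n \<longrightarrow> fg_adj ?D (?p ! j) (?p ! Suc j)"
    show "(r i, k i) \<in> ?D" if "i < n" for i
      using H[rule_format, of "2 * i"] fg_adj_interleave[of "2 * i" n] that by simp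
    show "(r (Suc i), k i) \<in> ?D" if "Suc i < n" for i
      using H[rule_format, of "Suc (2 * i)"] fg_adj_interleave[of "Suc (2 * i)" n] that by simp
  next
    fix j assume E: "(\<forall>i<n. (r i, k i) \<in> ?D) \<and> (\<forall>i. Suc i < n \<longrightarrow> (r (Suc i), k i) \<in> ?D)"
      and jn: "Suc j < 2 * n"
    show "fg_adj ?D (?p ! j) (?p ! Suc j)"
    proof (cases "even j")
      case True
      then have "j div 2 < n" using jn by presburger
      then show ?thesis using True E fg_adj_interleave[OF jn] by simp
    next
      case False
      then have "Suc (j div 2) < n" using jn by presburger
      then show ?thesis using False E fg_adj_interleave[OF jn] by simp
    qed
  qed
  have "length ?p \<noteq> 0" using assms by simp
  then have "?p \<noteq> []" by blast
  moreover have "isl (hd ?p)" using calculation assms by (simp add: hd_conv_nth nth_interleave)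
  ultimately show ?thesis
    unfolding ham_paths_def ham_seqs_def bij_betw_def
    by (simp add: distinct_interleave_iff set_interleave fg_vertices_eq_Plus Plus_eq_Plus_iff adj)
       blast
qed

lemma fg_adj_isl: "fg_adj D x y \<Longrightarrow> isl y \<longleftrightarrow> \<not> isl x"
  by (cases x; cases y) auto

lemma ham_path_decompose:
  assumes "vs \<in> ham_paths n lam"
  shows "vs = interleave n (path_row vs) (path_col vs)"
    and "ham_seqs n lam (path_row vs) (path_col vs)"
proof -
  have len: "length vs = 2 * n"
    using assms distinct_card[of vs] by (simp add: ham_paths_def fg_vertices_eq_Plus card_Plus)
  have parity: "isl (vs ! j) \<longleftrightarrow> even j" if "j < length vs" for j
    using that
  proof (induction j)
    case 0
    then show ?case using assms by (simp add: ham_paths_def hd_conv_nth)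
  next
    case (Suc j)
    then have "fg_adj (ferrers_diagram n lam) (vs ! j) (vs ! Suc j)"
      using assms by (simp add: ham_paths_def)
    then show ?case using Suc fg_adj_isl by simp
  qed
  show decomp: "vs = interleave n (path_row vs) (path_col vs)"
  proof (rule nth_equalityI)
    fix j assume "j < length vs"
    moreover have "j = 2 * (j div 2) \<or> j = Suc (2 * (j div 2)) \<and> odd j" by presburger
    ultimately show "vs ! j = interleave n (path_row vs) (path_col vs) ! j"
      using parity len by (auto simp: nth_interleave path_row_def path_col_def)
  qed (simp add: len)
  have "0 < n" using assms len by (cases n) (auto simp: ham_paths_def)
  then show "ham_seqs n lam (path_row vs) (path_col vs)"
    using assms decomp interleave_in_ham_paths_iff by metis
qed

section \<open>The map Phi on sequences\<close>

definition boxes :: "(nat \<Rightarrow> nat) \<Rightarrow> (nat \<Rightarrow> nat) \<Rightarrow> nat \<Rightarrow> (nat \<times> nat) set" where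
  "boxes r c m = (\<lambda>j. (r j, c j)) ` {..<m}"

lemma phi_aux_snoc:
  "phi_aux (ps @ [(a, b)]) p A B =
     (case phi_aux ps p A B of (A', B') \<Rightarrow>
        (insert (a, phi_col (if ps = [] then p else snd (last ps)) A') A', insert (a, b) B'))"
proof (induction ps arbitrary: p A B)
  case (Cons q ps)
  then show ?case by (cases q) simp
qed simp

lemma phi_aux_eq_boxes:
  "phi_aux (map (\<lambda>i. (r i, k i)) [0..<m]) 1 {} {} = (boxes r (a_col k) m, boxes r k m)"
proof (induction m)
  case (Suc m)
  have prev: "(if map (\<lambda>i. (r i, k i)) [0..<m] = [] then 1
      else snd (last (map (\<lambda>i. (r i, k i)) [0..<m]))) = prev_col k m"
    by (cases m) (auto simp: prev_col_def)
  have "snd ` boxes r (a_col k) m = used_cols k m"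
    by (auto simp: boxes_def used_cols_eq image_image)
  then have "phi_col (prev_col k m) (boxes r (a_col k) m) = a_col k m"
    by (simp add: phi_col_eq_next_free a_col_def)
  moreover have snoc: "map (\<lambda>i. (r i, k i)) [0..<Suc m] = map (\<lambda>i. (r i, k i)) [0..<m] @ [(r m, k m)]"
    by simp
  ultimately show ?case
    unfolding snoc phi_aux_snoc Suc.IH prev by (simp add: boxes_def lessThan_Suc)
qed (simp add: boxes_def)

lemma Phi_eq:
  "Phi n vs = (boxes (path_row vs) (a_col (path_col vs)) n, boxes (path_row vs) (path_col vs) n)"
  unfolding Phi_def path_pairs_def path_row_def[symmetric] path_col_def[symmetric]
  by (rule phi_aux_eq_boxes)

lemma Phi_interleave: "Phi n (interleave n r k) = (boxes r (a_col k) n, boxes r k n)"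
  unfolding Phi_def path_pairs_interleave by (rule phi_aux_eq_boxes)

lemma phi_A_before_eq:
  "i \<le> n \<Longrightarrow> phi_A_before n vs i = boxes (path_row vs) (a_col (path_col vs)) i"
  unfolding phi_A_before_def path_pairs_def path_row_def[symmetric] path_col_def[symmetric]
  by (simp only: take_map take_upt add_0 min_absorb1 phi_aux_eq_boxes fst_conv)

lemma phi_prev_eq: "i < n \<Longrightarrow> phi_prev n vs i = prev_col (path_col vs) i"
  by (cases i) (simp_all add: phi_prev_def prev_col_def path_pairs_def path_col_def)

lemma ferrers_diagram_left:
  "(a, b) \<in> ferrers_diagram n lam \<Longrightarrow> 0 < b' \<Longrightarrow> b' \<le> b \<Longrightarrow> (a, b') \<in> ferrers_diagram n lam"
  by (auto simp: ferrers_diagram_def)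

lemma a_col_in_ferrers_diagram:
  assumes "ham_seqs n lam r k" "i < n"
  shows "(r i, a_col k i) \<in> ferrers_diagram n lam"
proof -
  have k: "inj_on k {..<n}" "k ` {..<n} = {1..n}" using assms(1) by (auto simp: ham_seqs_def bij_betw_def)
  have pos: "\<forall>j\<le>i. 0 < k j" using k(2) assms(2) by fastforce
  have box: "(r i, k i) \<in> ferrers_diagram n lam" using assms by (simp add: ham_seqs_def)
  show ?thesis
  proof (cases "prev_col k i \<in> used_cols k i")
    case True
    have "a_col k i \<le> k i"
      by (rule a_col_le_current) (use k(1) assms(2) pos True in \<open>auto intro: inj_on_subset\<close>)
    moreover have "0 < a_col k i" using pos by (simp add: a_col_pos)
    ultimately show ?thesis using ferrers_diagram_left[OF box] by blast
  next
    case False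
    then have "a_col k i = prev_col k i" by (simp add: a_col_def next_free_def)
    then show ?thesis
      using assms box ferrers_diagram_left[OF box, of 1] pos
      by (cases i) (auto simp: ham_seqs_def prev_col_def)
  qed
qed

lemma Phi_well_defined:
  assumes "vs \<in> ham_paths n lam" "i < n"
  shows "(phi_prev n vs i \<in> snd ` phi_A_before n vs i \<longrightarrow>
            (\<exists>c. phi_prev n vs i < c \<and> c \<le> n \<and> c \<notin> snd ` phi_A_before n vs i)) \<and>
         (fst (path_pairs n vs ! i), phi_col (phi_prev n vs i) (phi_A_before n vs i))
            \<in> ferrers_diagram n lam"
proof -
  let ?r = "path_row vs" and ?k = "path_col vs"
  have seqs: "ham_seqs n lam ?r ?k" by (rule ham_path_decompose(2)[OF assms(1)])
  have used: "snd ` phi_A_before n vs i = used_cols ?k i"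
    using assms(2) by (auto simp: phi_A_before_eq boxes_def used_cols_eq image_image)
  have prev: "phi_prev n vs i = prev_col ?k i" by (rule phi_prev_eq[OF assms(2)])
  have col: "phi_col (prev_col ?k i) (phi_A_before n vs i) = a_col ?k i"
    by (simp add: phi_col_eq_next_free used a_col_def)
  have row: "fst (path_pairs n vs ! i) = ?r i" using assms(2) by (simp add: path_pairs_def path_row_def)
  have k: "inj_on ?k {..<i}" "?k ` {..<i} \<subseteq> {1..n}"
    using seqs assms(2) by (auto simp: ham_seqs_def bij_betw_def intro: inj_on_subset)
  have "prev_col ?k i < a_col ?k i \<and> a_col ?k i \<le> n \<and> a_col ?k i \<notin> used_cols ?k i"
    if "prev_col ?k i \<in> used_cols ?k i"
    using a_col_if_prev_used(1)[OF k(1) _ that] a_col_bounded[OF k assms(2)] a_col_notin_used_cols k(2)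
    by fastforce
  then show ?thesis
    using a_col_in_ferrers_diagram[OF seqs assms(2)] by (auto simp: used prev col row)
qed

section \<open>Bijectivity\<close>

lemma boxes_in_rook_placements:
  assumes "inj_on r {..<n}" "inj_on c {..<n}" "\<forall>i<n. (r i, c i) \<in> ferrers_diagram n lam"
  shows "boxes r c n \<in> rook_placements n lam"
proof -
  have "inj_on (\<lambda>j. (r j, c j)) {..<n}" using assms(1) by (auto simp: inj_on_def)
  then have "card (boxes r c n) = n" by (simp add: boxes_def card_image)
  moreover have "inj_on fst (boxes r c n)" "inj_on snd (boxes r c n)"
    using assms(1,2) by (auto simp: boxes_def inj_on_def)
  ultimately show ?thesis using assms(3) by (auto simp: rook_placements_def boxes_def)
qed

lemma Phi_in_rook_placements:
  assumes "vs \<in> ham_paths n lam"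
  shows "Phi n vs \<in> rook_placements n lam \<times> rook_placements n lam"
proof -
  have seqs: "ham_seqs n lam (path_row vs) (path_col vs)" by (rule ham_path_decompose(2)[OF assms])
  then have "inj_on (path_row vs) {..<n}" "inj_on (path_col vs) {..<n}"
    by (auto simp: ham_seqs_def bij_betw_def)
  then show ?thesis
    using seqs a_col_in_ferrers_diagram[OF seqs] inj_a_col[of "path_col vs"]
    by (auto simp: Phi_eq ham_seqs_def intro!: boxes_in_rook_placements intro: inj_on_subset)
qed

lemma seqs_determined_by_boxes:
  assumes "inj_on r' {..<n}"
    and "boxes r (a_col k) n = boxes r' (a_col k') n" and "boxes r k n = boxes r' k' n"
    and "i \<le> n"
  shows "\<forall>j<i. r j = r' j \<and> k j = k' j"
  using assms(4)
proof (induction i)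
  case (Suc i)
  then have IH: "\<forall>j<i. r j = r' j \<and> k j = k' j" and i: "i < n" by auto
  have same_col: "a_col k i = a_col k' i" by (rule a_col_cong) (use IH in auto)
  have "(r i, a_col k i) \<in> boxes r' (a_col k') n"
    using i by (simp add: boxes_def[of r] flip: assms(2))
  then obtain j where j: "j < n" "r i = r' j" "a_col k i = a_col k' j"
    by (auto simp: boxes_def)
  then have "j = i" using same_col inj_a_col[of k'] by (auto dest: injD)
  then have row: "r i = r' i" using j by simp
  have "(r i, k i) \<in> boxes r' k' n"
    using i by (simp add: boxes_def[of r] flip: assms(3))
  then obtain j' where j': "j' < n" "r i = r' j'" "k i = k' j'"
    by (auto simp: boxes_def)
  then have "j' = i" using row assms(1) i by (auto dest: inj_onD)
  then show ?case using IH row j' less_Suc_eq by auto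
qed simp

lemma inj_on_Phi: "inj_on (Phi n) (ham_paths n lam)"
proof (rule inj_onI)
  fix vs vs' assume vs: "vs \<in> ham_paths n lam" and vs': "vs' \<in> ham_paths n lam"
    and eq: "Phi n vs = Phi n vs'"
  have "inj_on (path_row vs') {..<n}"
    using ham_path_decompose(2)[OF vs'] by (simp add: ham_seqs_def bij_betw_def)
  then have "\<forall>j<n. path_row vs j = path_row vs' j \<and> path_col vs j = path_col vs' j"
    using eq by (intro seqs_determined_by_boxes) (auto simp: Phi_eq)
  then show "vs = vs'"
    using ham_path_decompose(1)[OF vs] ham_path_decompose(1)[OF vs'] interleave_cong by metis
qed

lemma bij_betw_if_inj_upto:
  fixes f :: "nat \<Rightarrow> nat"
  assumes "inj_on f {..<n}" "f ` {..<n} \<subseteq> {1..n}"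
  shows "bij_betw f {..<n} {1..n}"
proof -
  have "card (f ` {..<n}) = card {1..n}" using card_image[OF assms(1)] by simp
  then show ?thesis using assms card_subset_eq[of "{1..n}"] by (simp add: bij_betw_def)
qed

lemma graph_bij_fst:
  assumes "inj_on fst R" "inj_on snd R"
  shows "\<exists>f. bij_betw f (fst ` R) (snd ` R) \<and> (\<forall>x\<in>fst ` R. (x, f x) \<in> R)"
proof -
  let ?t = "the_inv_into R fst"
  have t: "bij_betw ?t (fst ` R) R"
    by (rule bij_betw_the_inv_into[OF inj_on_imp_bij_betw[OF assms(1)]])
  have "bij_betw (snd \<circ> ?t) (fst ` R) (snd ` R)"
    by (rule bij_betw_trans[OF t inj_on_imp_bij_betw[OF assms(2)]])
  moreover have "(x, (snd \<circ> ?t) x) \<in> R" if "x \<in> fst ` R" for x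
    using f_the_inv_into_f[OF assms(1) that] bij_betwE[OF t] that
    by (metis comp_apply prod.collapse)
  ultimately show ?thesis by blast
qed

lemma graph_bij_snd:
  assumes "inj_on fst R" "inj_on snd R"
  shows "\<exists>f. bij_betw f (snd ` R) (fst ` R) \<and> (\<forall>y\<in>snd ` R. (f y, y) \<in> R)"
proof -
  have "inj_on fst (prod.swap ` R)" "inj_on snd (prod.swap ` R)"
    using assms by (auto simp: inj_on_def)
  from graph_bij_fst[OF this] obtain f
    where "bij_betw f (fst ` prod.swap ` R) (snd ` prod.swap ` R)"
      and "\<forall>y\<in>fst ` prod.swap ` R. (y, f y) \<in> prod.swap ` R"
    by blast
  moreover have "fst ` prod.swap ` R = snd ` R" "snd ` prod.swap ` R = fst ` R"
    by (simp_all add: image_image)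
  ultimately show ?thesis by (metis pair_in_swap_image)
qed

lemma ferrers_row_le:
  assumes "ferrers_shape n lam" "1 \<le> a" "a \<le> n"
  shows "lam a \<le> n"
  using assms(2,3)
proof (induction a rule: nat_induct_at_least)
  case base
  then show ?case using assms(1) by (simp add: ferrers_shape_def)
next
  case (Suc a)
  then have "lam (Suc a) \<le> lam a" using assms(1) by (simp add: ferrers_shape_def)
  then show ?case using Suc by simp
qed

lemma ferrers_diagram_subset:
  assumes "ferrers_shape n lam"
  shows "ferrers_diagram n lam \<subseteq> {1..n} \<times> {1..n}"
proof
  fix x assume "x \<in> ferrers_diagram n lam"
  then obtain a b where "x = (a, b)" "1 \<le> a" "a \<le> n" "1 \<le> b" "b \<le> lam a"
    by (auto simp: ferrers_diagram_def)
  then show "x \<in> {1..n} \<times> {1..n}" using ferrers_row_le[OF assms, of a] by auto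
qed

lemma rook_placement_projections:
  assumes "ferrers_shape n lam" "R \<in> rook_placements n lam"
  shows "fst ` R = {1..n}" and "snd ` R = {1..n}"
proof -
  have R: "R \<subseteq> {1..n} \<times> {1..n}" "card R = n" "inj_on fst R" "inj_on snd R"
    using assms ferrers_diagram_subset[OF assms(1)] by (auto simp: rook_placements_def)
  show "fst ` R = {1..n}" using R by (intro card_subset_eq) (auto simp: card_image)
  show "snd ` R = {1..n}" using R by (intro card_subset_eq) (auto simp: card_image)
qed

lemma rook_placement_eq_boxes:
  assumes "R \<in> rook_placements n lam" "0 < n" "inj_on r {..<n}" "boxes r c n \<subseteq> R"
  shows "boxes r c n = R"
proof (rule card_subset_eq)
  show "finite R" using assms(1,2) card_ge_0_finite by (auto simp: rook_placements_def)
  have "inj_on (\<lambda>j. (r j, c j)) {..<n}" using assms(3) by (auto simp: inj_on_def)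
  then show "card (boxes r c n) = card R"
    using assms(1) by (simp add: boxes_def card_image rook_placements_def)
qed (rule assms(4))

lemma exists_col_seq: "\<exists>k. \<forall>i<m. k i = g (a_col k i)"
proof (induction m)
  case (Suc m)
  then obtain k where k: "\<forall>i<m. k i = g (a_col k i)" by blast
  define k' where "k' = k(m := g (a_col k m))"
  have "a_col k' i = a_col k i" if "i \<le> m" for i
    by (rule a_col_cong) (use that in \<open>simp add: k'_def\<close>)
  then have "\<forall>i<Suc m. k' i = g (a_col k' i)" using k by (simp add: k'_def less_Suc_eq)
  then show ?case by blast
qed simp

lemma inj_on_col_seq:
  assumes "inj_on g C" "a_col k ` {..<i} \<subseteq> C" "\<forall>j<i. k j = g (a_col k j)"
  shows "inj_on k {..<i}"
proof -
  have "inj_on (g \<circ> a_col k) {..<i}"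
    using comp_inj_on[OF inj_on_subset[OF inj_a_col] inj_on_subset[OF assms(1,2)]] by blast
  moreover have "inj_on k {..<i} \<longleftrightarrow> inj_on (g \<circ> a_col k) {..<i}"
    by (rule inj_on_cong) (use assms(3) in simp)
  ultimately show ?thesis by blast
qed

lemma col_seq_a_cols_bounded:
  assumes "inj_on g {1..n}" "g ` {1..n} \<subseteq> {1..n}" "\<forall>j<n. k j = g (a_col k j)"
  shows "a_col k ` {..<n} \<subseteq> {1..n}"
proof -
  have "a_col k i \<in> {1..n}" if "i < n" for i
    using that
  proof (induction i rule: less_induct)
    case (less i)
    have a_cols: "a_col k ` {..<i} \<subseteq> {1..n}" using less by auto
    have "k ` {..<i} \<subseteq> {1..n}" using a_cols assms(2,3) less.prems by fastforce
    moreover have "inj_on k {..<i}" using inj_on_col_seq[OF assms(1) a_cols] assms(3) less.prems by simp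
    ultimately show ?case using a_col_bounded less.prems by blast
  qed
  then show ?thesis by blast
qed

lemma ham_seqs_of_rook_functions:
  assumes \<sigma>: "bij_betw \<sigma> {1..n} {1..n}" "\<forall>a\<in>{1..n}. (a, \<sigma> a) \<in> B"
    and \<tau>: "bij_betw \<tau> {1..n} {1..n}" "\<forall>c\<in>{1..n}. (\<tau> c, c) \<in> A"
    and k: "\<forall>i<n. k i = \<sigma> (\<tau> (a_col k i))"
    and AB: "A \<subseteq> ferrers_diagram n lam" "B \<subseteq> ferrers_diagram n lam"
  shows "ham_seqs n lam (\<tau> \<circ> a_col k) k"
    and "boxes (\<tau> \<circ> a_col k) (a_col k) n \<subseteq> A" and "boxes (\<tau> \<circ> a_col k) k n \<subseteq> B"
proof -
  let ?r = "\<tau> \<circ> a_col k" and ?D = "ferrers_diagram n lam"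
  have g: "inj_on (\<sigma> \<circ> \<tau>) {1..n}" "(\<sigma> \<circ> \<tau>) ` {1..n} \<subseteq> {1..n}"
    using bij_betw_trans[OF \<tau>(1) \<sigma>(1)] by (auto simp: bij_betw_def)
  have cols: "a_col k ` {..<n} \<subseteq> {1..n}" using col_seq_a_cols_bounded[OF g] k by simp
  have rows: "?r ` {..<n} \<subseteq> {1..n}" using bij_betwE[OF \<tau>(1)] cols by auto
  have rA: "(?r i, a_col k i) \<in> A" if "i < n" for i using \<tau>(2) cols that by auto
  have rB: "(?r i, k i) \<in> B" if "i < n" for i using \<sigma>(2) rows k that by auto
  show "boxes ?r (a_col k) n \<subseteq> A" "boxes ?r k n \<subseteq> B" using rA rB by (auto simp: boxes_def)
  show "ham_seqs n lam ?r k"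
    unfolding ham_seqs_def
  proof (intro conjI allI impI)
    have "inj_on ?r {..<n}"
      using comp_inj_on[OF inj_on_subset[OF inj_a_col] inj_on_subset[OF bij_betw_imp_inj_on[OF \<tau>(1)] cols]]
      by simp
    then show "bij_betw ?r {..<n} {1..n}" using rows by (rule bij_betw_if_inj_upto)
    show "bij_betw k {..<n} {1..n}"
      using inj_on_col_seq[OF g(1) cols] g(2) cols k by (intro bij_betw_if_inj_upto) force+
    show "(?r i, k i) \<in> ?D" if "i < n" for i using rB[OF that] AB(2) by blast
    show "(?r (Suc i), k i) \<in> ?D" if "Suc i < n" for i
    proof (rule ferrers_diagram_left)
      show "(?r (Suc i), a_col k (Suc i)) \<in> ?D" using rA[OF that] AB(1) by blast
      show "k i \<le> a_col k (Suc i)" using prev_col_le_a_col[of k "Suc i"] by (simp add: prev_col_def)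
      show "0 < k i" using rB[of i] that AB(2) by (auto simp: ferrers_diagram_def)
    qed
  qed
qed

lemma Phi_surj:
  assumes shape: "ferrers_shape n lam"
    and A: "A \<in> rook_placements n lam" and B: "B \<in> rook_placements n lam"
  shows "(A, B) \<in> Phi n ` ham_paths n lam"
proof -
  have n: "0 < n" using shape by (simp add: ferrers_shape_def)
  have "inj_on fst A" "inj_on snd A" using A by (auto simp: rook_placements_def)
  from graph_bij_snd[OF this] obtain \<tau>
    where \<tau>: "bij_betw \<tau> {1..n} {1..n}" "\<forall>c\<in>{1..n}. (\<tau> c, c) \<in> A"
    unfolding rook_placement_projections[OF shape A] by blast
  have "inj_on fst B" "inj_on snd B" using B by (auto simp: rook_placements_def)
  from graph_bij_fst[OF this] obtain \<sigma>
    where \<sigma>: "bij_betw \<sigma> {1..n} {1..n}" "\<forall>a\<in>{1..n}. (a, \<sigma> a) \<in> B"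
    unfolding rook_placement_projections[OF shape B] by blast
  obtain k where k: "\<forall>i<n. k i = \<sigma> (\<tau> (a_col k i))"
    using exists_col_seq[of n "\<lambda>c. \<sigma> (\<tau> c)"] by blast
  let ?r = "\<tau> \<circ> a_col k"
  have AB: "A \<subseteq> ferrers_diagram n lam" "B \<subseteq> ferrers_diagram n lam"
    using A B by (auto simp: rook_placements_def)
  note seqs = ham_seqs_of_rook_functions[OF \<sigma> \<tau> k AB]
  have r_inj: "inj_on ?r {..<n}" using seqs(1) by (simp add: ham_seqs_def bij_betw_def)
  have "Phi n (interleave n ?r k) = (A, B)"
    using rook_placement_eq_boxes[OF A n r_inj seqs(2)] rook_placement_eq_boxes[OF B n r_inj seqs(3)]
    by (simp add: Phi_interleave)
  moreover have "interleave n ?r k \<in> ham_paths n lam"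
    using interleave_in_ham_paths_iff[OF n] seqs(1) by blast
  ultimately show ?thesis by (metis image_eqI)
qed

theorem mainTheorem2:
  fixes n :: nat and lam :: "nat \<Rightarrow> nat"
  assumes "ferrers_shape n lam"
  shows "(\<forall>vs \<in> ham_paths n lam. \<forall>i < n.
            (phi_prev n vs i \<in> snd ` phi_A_before n vs i \<longrightarrow>
               (\<exists>c. phi_prev n vs i < c \<and> c \<le> n \<and> c \<notin> snd ` phi_A_before n vs i)) \<and>
            (fst (path_pairs n vs ! i), phi_col (phi_prev n vs i) (phi_A_before n vs i))
               \<in> ferrers_diagram n lam)
       \<and> bij_betw (Phi n) (ham_paths n lam) (rook_placements n lam \<times> rook_placements n lam)
       \<and> card (ham_paths n lam) = (card (rook_placements n lam))\<^sup>2"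
proof -
  have bij: "bij_betw (Phi n) (ham_paths n lam) (rook_placements n lam \<times> rook_placements n lam)"
    unfolding bij_betw_def using inj_on_Phi Phi_in_rook_placements Phi_surj[OF assms] by blast
  then have "card (ham_paths n lam) = (card (rook_placements n lam))\<^sup>2"
    by (simp add: bij_betw_same_card card_cartesian_product power2_eq_square)
  then show ?thesis using Phi_well_defined bij by blast
qed

end
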